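(* Let $\mathcal{X}$ be a finite set and $\underline{Q}$ a lower transition rate operator on $\mathcal{L}(\mathcal{X})$. Then for any $t>0$: $\underline{Q}$ is ergodic if and only if $\underline{T}_t$ is regularly absorbing.
   Context: $\mathcal{L}(\mathcal{X})$ is the set of real-valued functions on $\mathcal{X}$ with pointwise operations and order, real constants identified with constant functions, $\mathbb{I}_A$ the indicator of $A\subseteq\mathcal{X}$, $\mathbb{I}_x\coloneqq\mathbb{I}_{\{x\}}$. A lower transition rate operator is a map $\underline{Q}\colon\mathcal{L}(\mathcal{X})\to\mathcal{L}(\mathcal{X})$ such that for all $f,g$, $\lambda\ge0$, $\mu\in\mathbb{R}$, $x,y\in\mathcal{X}$: $\underline{Q}(\mu)=0$; $\underline{Q}(f+g)\ge\underline{Q}f+\underline{Q}g$; $\underline{Q}(\lambda f)=\lambda\underline{Q}f$; $x\ne y\Rightarrow\underline{Q}(\mathbb{I}_y)(x)\ge0$. For each $f$, $t\mapsto\underline{T}_tf$ is the unique solution on $[0,\infty)$ of $\frac{d}{dt}\underline{T}_tf=\underline{Q}\,\underline{T}_tf$ with $\underline{T}_0f=f$ (existence and uniqueness are known); $\underline{T}_t$ denotes the operator $f\mapsto\underline{T}_tf$. $\underline{Q}$ is ergodic if for all $f$, $\lim_{t\to\infty}\underline{T}_tf$ exists and is a constant function. For an operator $\underline{T}$ (here $\underline{T}=\underline{T}_t$) let $\overline{T}f\coloneqq-\underline{T}(-f)$ and let powers denote composition. $\underline{T}$ is regularly absorbing if $\mathcal{X}_{\mathrm{RA}}\coloneqq\{x\in\mathcal{X}\colon\exists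 n\in\mathbb{N},\ \min\overline{T}^n\mathbb{I}_x>0\}\neq\emptyset$ and for every $x\in\mathcal{X}\setminus\mathcal{X}_{\mathrm{RA}}$ there is $n\in\mathbb{N}$ with $\underline{T}^n\mathbb{I}_{\mathcal{X}_{\mathrm{RA}}}(x)>0$. *)

theory Defs
  imports Complex_Main
begin

text \<open>Gambles on a finite state space 'x are functions 'x \<Rightarrow> real (pointwise operations and order).\<close>

definition ind :: "'x set \<Rightarrow> 'x \<Rightarrow> real" where
  "ind A = (\<lambda>z. if z \<in> A then 1 else 0)"

definition lower_transition_rate_operator :: "(('x \<Rightarrow> real) \<Rightarrow> ('x \<Rightarrow> real)) \<Rightarrow> bool" where
  "lower_transition_rate_operator Q \<longleftrightarrow>
     (\<forall>\<mu>::real. Q (\<lambda>_. \<mu>) = (\<lambda>_. 0)) \<and>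
     (\<forall>f g x. Q (\<lambda>z. f z + g z) x \<ge> Q f x + Q g x) \<and>
     (\<forall>(l::real) f. l \<ge> 0 \<longrightarrow> Q (\<lambda>z. l * f z) = (\<lambda>x. l * Q f x)) \<and>
     (\<forall>x y. x \<noteq> y \<longrightarrow> Q (ind {y}) x \<ge> 0)"

definition is_lower_solution :: "(('x \<Rightarrow> real) \<Rightarrow> ('x \<Rightarrow> real)) \<Rightarrow> ('x \<Rightarrow> real) \<Rightarrow> (real \<Rightarrow> 'x \<Rightarrow> real) \<Rightarrow> bool" where
  "is_lower_solution Q f g \<longleftrightarrow> g 0 = f \<and>
     (\<forall>s\<ge>0. \<forall>x. ((\<lambda>r. g r x) has_real_derivative Q (g s) x) (at s within {0..}))"

definition lower_T :: "(('x \<Rightarrow> real) \<Rightarrow> ('x \<Rightarrow> real)) \<Rightarrow> real \<Rightarrow> ('x \<Rightarrow> real) \<Rightarrow> ('x \<Rightarrow> real)" where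
  "lower_T Q t f = (THE h. \<exists>g. is_lower_solution Q f g \<and> g t = h)"

definition ergodic :: "(('x \<Rightarrow> real) \<Rightarrow> ('x \<Rightarrow> real)) \<Rightarrow> bool" where
  "ergodic Q \<longleftrightarrow> (\<forall>f. \<exists>c::real. \<forall>x. ((\<lambda>t. lower_T Q t f x) \<longlongrightarrow> c) at_top)"

definition upper_op :: "(('x \<Rightarrow> real) \<Rightarrow> ('x \<Rightarrow> real)) \<Rightarrow> ('x \<Rightarrow> real) \<Rightarrow> ('x \<Rightarrow> real)" where
  "upper_op T f = (\<lambda>x. - T (\<lambda>z. - f z) x)"

definition RA_set :: "(('x::finite \<Rightarrow> real) \<Rightarrow> ('x \<Rightarrow> real)) \<Rightarrow> 'x set" where
  "RA_set T = {x. \<exists>n::nat. n \<ge> 1 \<and> Min (range ((upper_op T ^^ n) (ind {x}))) > 0}"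

definition regularly_absorbing :: "(('x::finite \<Rightarrow> real) \<Rightarrow> ('x \<Rightarrow> real)) \<Rightarrow> bool" where
  "regularly_absorbing T \<longleftrightarrow> RA_set T \<noteq> {} \<and>
     (\<forall>x. x \<notin> RA_set T \<longrightarrow> (\<exists>n::nat. n \<ge> 1 \<and> (T ^^ n) (ind (RA_set T)) x > 0))"

end

theory Submission
  imports Defs "HOL-Analysis.Analysis"
begin

text \<open>
  Since Q is superadditive, positively homogeneous and has nonnegative off-diagonal rates, it
  is Lipschitz and satisfies a comparison principle; Picard iteration and this principle give
  T_s, make it a lower transition operator and a semigroup, so that T_t^n = T_{nt}.

  If Q is ergodic, the upper probabilities of the singletons under T_t^n converge to constants.
  Whenever T_t^n gives a set C upper probability one, these constants sum to at least one over C,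
  so some state of C is regularly absorbing; taking C to be all states, resp. the complement of
  the regularly absorbing ones, yields both conditions of regular absorption.

  Conversely, the regularly absorbing states form a closed, absorbing class, so some power T_t^N
  charges each of them and reaches them from everywhere with probability at least \<epsilon> > 0. Then
  T_t^N shrinks the oscillation max f - min f by the factor 1 - \<epsilon>/2, while no T_s enlarges the
  range of f. Hence the nested ranges of T_s f close in on a single constant.
\<close>

lemma ind_eq_sum_singletons: "finite C \<Longrightarrow> ind C z = (\<Sum>y\<in>C. ind {y} z)"
  unfolding ind_def by (simp add: sum.If_cases)

lemma ind_Compl: "ind (- R) = (\<lambda>z. 1 - ind R z)"
  unfolding ind_def by auto

lemma ind_UNIV: "ind UNIV = (\<lambda>_. 1)"
  unfolding ind_def by simp

lemma ind_nonneg: "0 \<le> ind A z"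
  unfolding ind_def by simp

lemma ind_le_one: "ind A z \<le> 1"
  unfolding ind_def by simp

lemma sum_ind_singletons_expansion: "(\<lambda>z. \<Sum>y\<in>UNIV. f y * ind {y} z) = (f :: 'x::finite \<Rightarrow> real)"
proof
  fix z
  have "(\<Sum>y\<in>UNIV. f y * ind {y} z) = (\<Sum>y\<in>UNIV. if y = z then f y else 0)"
    by (rule sum.cong) (auto simp: ind_def)
  then show "(\<Sum>y\<in>UNIV. f y * ind {y} z) = f z" by simp
qed

section \<open>Bounds for lower transition rate operators\<close>

definition rate_bound :: "(('x::finite \<Rightarrow> real) \<Rightarrow> ('x \<Rightarrow> real)) \<Rightarrow> real" where
  "rate_bound Q = (\<Sum>y\<in>UNIV. \<Sum>x\<in>UNIV. \<bar>Q (ind {y}) x\<bar> + \<bar>Q (\<lambda>z. - ind {y} z) x\<bar>)"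

context
  fixes Q :: "('x::finite \<Rightarrow> real) \<Rightarrow> ('x \<Rightarrow> real)"
  assumes Q: "lower_transition_rate_operator Q"
begin

lemma Q_const: "Q (\<lambda>_. c) = (\<lambda>_. 0)"
  using Q unfolding lower_transition_rate_operator_def by blast

lemma Q_superadd: "Q f x + Q g x \<le> Q (\<lambda>z. f z + g z) x"
  using Q unfolding lower_transition_rate_operator_def by blast

lemma Q_pos_hom: "l \<ge> 0 \<Longrightarrow> Q (\<lambda>z. l * f z) = (\<lambda>x. l * Q f x)"
  using Q unfolding lower_transition_rate_operator_def by blast

lemma Q_offdiag_nonneg: "x \<noteq> y \<Longrightarrow> 0 \<le> Q (ind {y}) x"
  using Q unfolding lower_transition_rate_operator_def by blast

lemma Q_add_const: "Q (\<lambda>z. f z + c) = Q f"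
proof
  fix x
  have "Q f x + Q (\<lambda>_. c) x \<le> Q (\<lambda>z. f z + c) x" by (rule Q_superadd)
  moreover have "Q (\<lambda>z. f z + c) x + Q (\<lambda>_. -c) x \<le> Q (\<lambda>z. (f z + c) + (- c)) x" by (rule Q_superadd)
  ultimately show "Q (\<lambda>z. f z + c) x = Q f x" by (simp add: Q_const)
qed

lemma Q_sum_superadd: "finite A \<Longrightarrow> (\<Sum>y\<in>A. Q (u y) x) \<le> Q (\<lambda>z. \<Sum>y\<in>A. u y z) x"
proof (induction A rule: finite_induct)
  case empty
  then show ?case by (simp add: Q_const)
next
  case (insert a A)
  then have "(\<Sum>y\<in>insert a A. Q (u y) x) \<le> Q (u a) x + Q (\<lambda>z. \<Sum>y\<in>A. u y z) x" by simp
  also have "\<dots> \<le> Q (\<lambda>z. \<Sum>y\<in>insert a A. u y z) x" using Q_superadd insert by simp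
  finally show ?case .
qed

lemma abs_Q_ind_le_rate_bound:
  "\<bar>Q (ind {y}) x\<bar> \<le> rate_bound Q" "\<bar>Q (\<lambda>z. - ind {y} z) x\<bar> \<le> rate_bound Q"
proof -
  have "\<bar>Q (ind {y}) x\<bar> + \<bar>Q (\<lambda>z. - ind {y} z) x\<bar>
      \<le> (\<Sum>x\<in>UNIV. \<bar>Q (ind {y}) x\<bar> + \<bar>Q (\<lambda>z. - ind {y} z) x\<bar>)"
    by (rule member_le_sum) auto
  also have "\<dots> \<le> rate_bound Q"
    unfolding rate_bound_def by (rule member_le_sum) (auto intro: sum_nonneg)
  finally show "\<bar>Q (ind {y}) x\<bar> \<le> rate_bound Q" "\<bar>Q (\<lambda>z. - ind {y} z) x\<bar> \<le> rate_bound Q"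
    by auto
qed

lemma rate_bound_nonneg: "0 \<le> rate_bound Q"
  using abs_Q_ind_le_rate_bound(1) abs_ge_zero order_trans by blast

lemma Q_scaled_ind_ge: "- rate_bound Q * \<bar>c\<bar> \<le> Q (\<lambda>z. c * ind {y} z) x"
proof (cases "c \<ge> 0")
  case True
  have "c * (- rate_bound Q) \<le> c * Q (ind {y}) x"
    using True abs_Q_ind_le_rate_bound(1)[of y x] by (intro mult_left_mono) auto
  then show ?thesis using True Q_pos_hom[of c "ind {y}"] by (simp add: mult.commute)
next
  case False
  have "(\<lambda>z. c * ind {y} z) = (\<lambda>z. (-c) * (- ind {y} z))" by simp
  then have "Q (\<lambda>z. c * ind {y} z) x = (-c) * Q (\<lambda>z. - ind {y} z) x"
    using False Q_pos_hom[of "-c" "\<lambda>z. - ind {y} z"] by simp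
  moreover have "(-c) * (- rate_bound Q) \<le> (-c) * Q (\<lambda>z. - ind {y} z) x"
    using False abs_Q_ind_le_rate_bound(2)[of y x] by (intro mult_left_mono) auto
  ultimately show ?thesis using False by (simp add: mult.commute)
qed

lemma Q_ge_neg_l1: "- rate_bound Q * (\<Sum>y\<in>UNIV. \<bar>h y\<bar>) \<le> Q h x"
proof -
  have "- rate_bound Q * (\<Sum>y\<in>UNIV. \<bar>h y\<bar>) \<le> (\<Sum>y\<in>UNIV. Q (\<lambda>z. h y * ind {y} z) x)"
    unfolding sum_distrib_left by (rule sum_mono) (use Q_scaled_ind_ge in simp)
  also have "\<dots> \<le> Q (\<lambda>z. \<Sum>y\<in>UNIV. h y * ind {y} z) x" by (rule Q_sum_superadd) simp
  finally show ?thesis by (simp add: sum_ind_singletons_expansion)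
qed

lemma Q_lipschitz: "\<bar>Q f x - Q g x\<bar> \<le> rate_bound Q * (\<Sum>y\<in>UNIV. \<bar>f y - g y\<bar>)"
proof -
  have "Q g x + Q (\<lambda>z. f z - g z) x \<le> Q f x"
    using Q_superadd[of g x "\<lambda>z. f z - g z"] by simp
  moreover have "Q f x + Q (\<lambda>z. g z - f z) x \<le> Q g x"
    using Q_superadd[of f x "\<lambda>z. g z - f z"] by simp
  moreover have "- rate_bound Q * (\<Sum>y\<in>UNIV. \<bar>f y - g y\<bar>) \<le> Q (\<lambda>z. f z - g z) x"
    by (rule Q_ge_neg_l1)
  moreover have "- rate_bound Q * (\<Sum>y\<in>UNIV. \<bar>f y - g y\<bar>) \<le> Q (\<lambda>z. g z - f z) x"
    using Q_ge_neg_l1[of "\<lambda>z. g z - f z" x] by (simp add: abs_minus_commute)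
  ultimately show ?thesis by linarith
qed

lemma Q_nonneg_ge: assumes "\<And>z. 0 \<le> v z" shows "- rate_bound Q * v x \<le> Q v x"
proof -
  have "(if y = x then - rate_bound Q * v x else 0) \<le> Q (\<lambda>z. v y * ind {y} z) x" for y
  proof (cases "y = x")
    case True
    then show ?thesis using Q_scaled_ind_ge[of "v x" x x] assms[of x] by simp
  next
    case False
    then show ?thesis using Q_pos_hom[of "v y" "ind {y}"] Q_offdiag_nonneg[of x y] assms[of y] by simp
  qed
  then have "- rate_bound Q * v x \<le> (\<Sum>y\<in>UNIV. Q (\<lambda>z. v y * ind {y} z) x)"
    using sum_mono[of UNIV "\<lambda>y. if y = x then - rate_bound Q * v x else 0"] by simp
  also have "\<dots> \<le> Q (\<lambda>z. \<Sum>y\<in>UNIV. v y * ind {y} z) x" by (rule Q_sum_superadd) simp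
  finally show ?thesis by (simp add: sum_ind_singletons_expansion)
qed

text \<open>Splitting v into its positive and negative parts: only the positive part meets the
  nonnegative off-diagonal rates, the negative part is controlled in l1-norm.\<close>
lemma Q_ge_neg_part:
  "- rate_bound Q * v y - 2 * rate_bound Q * (\<Sum>z\<in>UNIV. max 0 (- v z)) \<le> Q v y"
proof -
  define K where "K = rate_bound Q"
  define vm where "vm z = max 0 (- v z)" for z
  have "v = (\<lambda>z. max 0 (v z) + (- vm z))" unfolding vm_def by auto
  then have "Q (\<lambda>z. max 0 (v z)) y + Q (\<lambda>z. - vm z) y \<le> Q v y"
    using Q_superadd[of "\<lambda>z. max 0 (v z)" y "\<lambda>z. - vm z"] by simp
  moreover have "- K * max 0 (v y) \<le> Q (\<lambda>z. max 0 (v z)) y"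
    unfolding K_def by (rule Q_nonneg_ge) simp
  moreover have "- K * (\<Sum>z\<in>UNIV. vm z) \<le> Q (\<lambda>z. - vm z) y"
    using Q_ge_neg_l1[of "\<lambda>z. - vm z" y] unfolding K_def by (simp add: vm_def)
  moreover have "K * vm y \<le> K * (\<Sum>z\<in>UNIV. vm z)"
    using rate_bound_nonneg unfolding K_def by (intro mult_left_mono member_le_sum) (auto simp: vm_def)
  moreover have "max 0 (v y) = v y + vm y" unfolding vm_def by auto
  ultimately show ?thesis unfolding K_def[symmetric] vm_def[symmetric] by (simp add: algebra_simps)
qed

end

section \<open>Calculus on the half-line\<close>

lemma integral_le_power:
  fixes e :: "real \<Rightarrow> real"
  assumes "0 \<le> s" and "e integrable_on {0..s}" and "\<And>r. r \<in> {0..s} \<Longrightarrow> e r \<le> C * r ^ k"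
  shows "integral {0..s} e \<le> C * (s ^ Suc k / Suc k)"
proof -
  have "((\<lambda>r. r ^ k) has_integral s ^ Suc k / Suc k - 0 ^ Suc k / Suc k) {0..s}"
  proof (rule fundamental_theorem_of_calculus)
    fix x :: real
    have "((\<lambda>r::real. r ^ Suc k / Suc k) has_real_derivative x ^ k) (at x within {0..s})"
      by (auto intro!: derivative_eq_intros) (cases k, auto simp: field_simps)
    then show "((\<lambda>r::real. r ^ Suc k / Suc k) has_vector_derivative x ^ k) (at x within {0..s})"
      by (simp add: has_real_derivative_iff_has_vector_derivative)
  qed (use assms in auto)
  then have int: "((\<lambda>r. C * r ^ k) has_integral C * (s ^ Suc k / Suc k)) {0..s}"
    by (intro has_integral_mult_right) simp
  have "integral {0..s} e \<le> integral {0..s} (\<lambda>r. C * r ^ k)"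
    by (rule integral_le[OF assms(2)]) (use int assms(3) in auto)
  also have "\<dots> = C * (s ^ Suc k / Suc k)"
    using int by (rule integral_unique)
  finally show ?thesis .
qed

text \<open>Homogeneous Gronwall lemma: iterating the inequality gives d s \<le> B (M s)^k / k! for every k.\<close>
lemma gronwall_zero:
  fixes d :: "real \<Rightarrow> real"
  assumes cont: "continuous_on {0..S} d" and nonneg: "\<And>s. s \<in> {0..S} \<Longrightarrow> 0 \<le> d s" and "0 \<le> M"
    and ineq: "\<And>s. s \<in> {0..S} \<Longrightarrow> d s \<le> M * integral {0..s} d"
    and s: "s \<in> {0..S}"
  shows "d s = 0"
proof -
  obtain B where B: "\<And>s. s \<in> {0..S} \<Longrightarrow> norm (d s) \<le> B"
    using compact_imp_bounded[OF compact_continuous_image[OF cont compact_Icc]]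
    unfolding bounded_iff by blast
  have bound: "d s \<le> B * ((M * s) ^ k / fact k)" if "s \<in> {0..S}" for s k
    using that
  proof (induction k arbitrary: s)
    case 0
    then show ?case using B[of s] by simp
  next
    case (Suc k)
    have "d integrable_on {0..s}"
      using Suc.prems by (intro integrable_continuous_interval continuous_on_subset[OF cont]) auto
    moreover have "d r \<le> (B * M ^ k / fact k) * r ^ k" if "r \<in> {0..s}" for r
      using Suc that by (auto simp: power_mult_distrib mult.assoc)
    ultimately have "integral {0..s} d \<le> (B * M ^ k / fact k) * (s ^ Suc k / Suc k)"
      using Suc.prems by (intro integral_le_power) auto
    then have "M * integral {0..s} d \<le> M * ((B * M ^ k / fact k) * (s ^ Suc k / Suc k))"
      using \<open>0 \<le> M\<close> by (rule mult_left_mono)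
    also have "\<dots> = B * ((M * s) ^ Suc k / fact (Suc k))"
      by (simp add: power_mult_distrib field_simps)
    finally show ?case using ineq[OF Suc.prems] by linarith
  qed
  have "(\<lambda>k. B * (inverse (fact k) * (M * s) ^ k)) \<longlonglongrightarrow> B * 0"
    by (intro tendsto_intros summable_LIMSEQ_zero summable_exp)
  then have "(\<lambda>k. B * ((M * s) ^ k / fact k)) \<longlonglongrightarrow> 0"
    by (simp add: field_simps)
  then have "d s \<le> 0"
    by (rule LIMSEQ_le_const) (use bound[OF s] in auto)
  then show "d s = 0" using nonneg[OF s] by simp
qed

lemma integral_has_real_derivative_atLeast:
  assumes "\<And>S. continuous_on {0..S} h" "0 \<le> s"
  shows "((\<lambda>u. integral {0..u} h) has_real_derivative h s) (at s within {0..})"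
proof -
  have "((\<lambda>u. integral {0..u} h) has_vector_derivative h s) (at s within {0..s+1})"
    by (rule integral_has_vector_derivative) (use assms in auto)
  moreover have "at s within {0..s+1} = at s within {0..}"
    by (rule at_within_nhd[of s "{s-1<..<s+1}"]) (use assms in auto)
  ultimately show ?thesis
    by (simp add: has_real_derivative_iff_has_vector_derivative)
qed

lemma continuous_on_if_has_real_derivative_atLeast:
  assumes "\<And>s. 0 \<le> s \<Longrightarrow> (F has_real_derivative D s) (at s within {0..})"
  shows "continuous_on {0..S} F"
  unfolding continuous_on_eq_continuous_within
proof
  fix s assume "s \<in> {0..S}"
  then have "continuous (at s within {0..}) F"
    using assms[of s] by (auto intro: has_vector_derivative_continuous
        simp: has_real_derivative_iff_has_vector_derivative)
  then show "continuous (at s within {0..S}) F" by (rule continuous_within_subset) auto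
qed

lemma has_integral_if_has_real_derivative_atLeast:
  assumes "\<And>r. 0 \<le> r \<Longrightarrow> (F has_real_derivative D r) (at r within {0..})" "0 \<le> s"
  shows "(D has_integral (F s - F 0)) {0..s}"
proof (rule fundamental_theorem_of_calculus)
  fix x assume "x \<in> {0..s}"
  then have "(F has_real_derivative D x) (at x within {0..s})"
    by (intro DERIV_subset[OF assms(1)]) auto
  then show "(F has_vector_derivative D x) (at x within {0..s})"
    by (simp add: has_real_derivative_iff_has_vector_derivative)
qed (use assms in auto)

lemma integral_le_diff_if_derivative_ge:
  assumes deriv: "\<And>r. 0 \<le> r \<Longrightarrow> (F has_real_derivative D r) (at r within {0..})"
    and "g integrable_on {0..s}" "\<And>r. 0 \<le> r \<Longrightarrow> g r \<le> D r" "0 \<le> s"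
  shows "integral {0..s} g \<le> F s - F 0"
proof -
  have "(D has_integral (F s - F 0)) {0..s}"
    by (rule has_integral_if_has_real_derivative_atLeast[OF deriv \<open>0 \<le> s\<close>])
  with assms(2,3) show ?thesis
    by (metis atLeastAtMost_iff has_integral_integral has_integral_le)
qed

lemma nonneg_if_derivative_ge_neg_mass:
  fixes \<psi> \<psi>' :: "real \<Rightarrow> 'x::finite \<Rightarrow> real"
  assumes deriv: "\<And>s y. 0 \<le> s \<Longrightarrow> ((\<lambda>r. \<psi> r y) has_real_derivative \<psi>' s y) (at s within {0..})"
    and ge: "\<And>s y. 0 \<le> s \<Longrightarrow> - M * (\<Sum>z\<in>UNIV. max 0 (- \<psi> s z)) \<le> \<psi>' s y"
    and "0 \<le> M" and init: "\<And>y. 0 \<le> \<psi> 0 y" and "0 \<le> s"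
  shows "0 \<le> \<psi> s y"
proof -
  define mass where "mass r = (\<Sum>z\<in>UNIV. max 0 (- \<psi> r z))" for r
  have cont: "continuous_on {0..S} mass" for S
    unfolding mass_def
    by (intro continuous_intros continuous_on_if_has_real_derivative_atLeast[OF deriv])
  have mass_nonneg: "0 \<le> mass r" for r unfolding mass_def by (intro sum_nonneg) auto
  have ineq: "mass r \<le> (M * CARD('x)) * integral {0..r} mass" if r: "r \<in> {0..s}" for r
  proof -
    have int: "mass integrable_on {0..r}" by (rule integrable_continuous_interval[OF cont])
    have "max 0 (- \<psi> r z) \<le> M * integral {0..r} mass" for z
    proof -
      have "integral {0..r} (\<lambda>u. - M * mass u) \<le> \<psi> r z - \<psi> 0 z"
        using ge r unfolding mass_def[symmetric]
        by (intro integral_le_diff_if_derivative_ge[OF deriv] integrable_on_mult_right[OF int]) auto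
      moreover have "integral {0..r} (\<lambda>u. - M * mass u) = - M * integral {0..r} mass"
        by (rule integral_mult_right)
      moreover have "0 \<le> M * integral {0..r} mass"
        using int mass_nonneg \<open>0 \<le> M\<close> by (simp add: Henstock_Kurzweil_Integration.integral_nonneg)
      ultimately show ?thesis using init[of z] by linarith
    qed
    then have "mass r \<le> (\<Sum>z\<in>(UNIV::'x set). M * integral {0..r} mass)"
      unfolding mass_def by (rule sum_mono)
    then show ?thesis by (simp add: algebra_simps)
  qed
  have "mass s = 0"
    using \<open>0 \<le> M\<close> \<open>0 \<le> s\<close> by (intro gronwall_zero[OF cont mass_nonneg _ ineq]) auto
  then have "max 0 (- \<psi> s y) = 0"
    unfolding mass_def by (subst (asm) sum_nonneg_eq_0_iff) auto
  then show ?thesis by simp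
qed

section \<open>Existence of solutions by Picard iteration\<close>

primrec picard_iterate ::
  "(('x \<Rightarrow> real) \<Rightarrow> ('x \<Rightarrow> real)) \<Rightarrow> ('x \<Rightarrow> real) \<Rightarrow> nat \<Rightarrow> real \<Rightarrow> 'x \<Rightarrow> real" where
  "picard_iterate Q f 0 s x = f x"
| "picard_iterate Q f (Suc k) s x = f x + integral {0..s} (\<lambda>r. Q (picard_iterate Q f k r) x)"

lemma picard_iterate_0 [simp]: "picard_iterate Q f 0 s = f"
  by (simp add: fun_eq_iff)

definition picard_limit :: "(('x \<Rightarrow> real) \<Rightarrow> ('x \<Rightarrow> real)) \<Rightarrow> ('x \<Rightarrow> real) \<Rightarrow> real \<Rightarrow> 'x \<Rightarrow> real" where
  "picard_limit Q f s y = f y + (\<Sum>j. picard_iterate Q f (Suc j) s y - picard_iterate Q f j s y)"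

context
  fixes Q :: "('x::finite \<Rightarrow> real) \<Rightarrow> ('x \<Rightarrow> real)"
  assumes Q: "lower_transition_rate_operator Q"
begin

lemma continuous_on_Q_comp:
  assumes "\<And>y. continuous_on S (\<lambda>r. g r y)"
  shows "continuous_on S (\<lambda>r. Q (g r) x)"
  unfolding continuous_on_def
proof
  fix r0 assume r0: "r0 \<in> S"
  have "((\<lambda>r. g r y) \<longlongrightarrow> g r0 y) (at r0 within S)" for y
    using assms[of y] r0 unfolding continuous_on_def by blast
  then have "((\<lambda>r. rate_bound Q * (\<Sum>y\<in>UNIV. \<bar>g r y - g r0 y\<bar>)) \<longlongrightarrow>
      rate_bound Q * (\<Sum>y\<in>UNIV. \<bar>g r0 y - g r0 y\<bar>)) (at r0 within S)"
    by (intro tendsto_intros)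
  then have "((\<lambda>r. rate_bound Q * (\<Sum>y\<in>UNIV. \<bar>g r y - g r0 y\<bar>)) \<longlongrightarrow> 0) (at r0 within S)"
    by simp
  then have "((\<lambda>r. Q (g r) x - Q (g r0) x) \<longlongrightarrow> 0) (at r0 within S)"
    by (rule Lim_null_comparison[rotated]) (auto intro!: always_eventually Q_lipschitz[OF Q])
  then show "((\<lambda>r. Q (g r) x) \<longlongrightarrow> Q (g r0) x) (at r0 within S)"
    by (rule LIM_zero_cancel)
qed

lemma uniform_limit_Q_comp:
  assumes lim: "\<And>z. uniform_limit S (\<lambda>n r. g n r z) (\<lambda>r. h r z) sequentially"
  shows "uniform_limit S (\<lambda>n r. Q (g n r) y) (\<lambda>r. Q (h r) y) sequentially"
proof (rule uniform_limitI)
  fix e :: real assume "0 < e"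
  define c where "c = rate_bound Q * CARD('x) + 1"
  have "0 \<le> rate_bound Q * CARD('x)" using rate_bound_nonneg[OF Q] by simp
  then have "0 < c" unfolding c_def by linarith
  then have "\<forall>\<^sub>F n in sequentially. \<forall>z. \<forall>r\<in>S. dist (g n r z) (h r z) < e / c"
    using \<open>0 < e\<close> by (intro eventually_all_finite uniform_limitD[OF lim]) simp
  then show "\<forall>\<^sub>F n in sequentially. \<forall>r\<in>S. dist (Q (g n r) y) (Q (h r) y) < e"
  proof eventually_elim
    case (elim n)
    show ?case
    proof
      fix r assume "r \<in> S"
      then have "(\<Sum>z\<in>UNIV. \<bar>g n r z - h r z\<bar>) \<le> CARD('x) * (e / c)"
        using elim by (intro sum_bounded_above) (auto simp: dist_real_def less_imp_le)
      then have "dist (Q (g n r) y) (Q (h r) y) \<le> rate_bound Q * (CARD('x) * (e / c))"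
        using Q_lipschitz[OF Q, of "g n r" y "h r"] rate_bound_nonneg[OF Q]
        unfolding dist_real_def by (meson mult_left_mono order_trans)
      also have "\<dots> < e"
        using \<open>0 < e\<close> \<open>0 < c\<close> rate_bound_nonneg[OF Q] by (simp add: c_def field_simps)
      finally show "dist (Q (g n r) y) (Q (h r) y) < e" .
    qed
  qed
qed

lemma continuous_on_picard_iterate: "continuous_on {0..S} (\<lambda>s. picard_iterate Q f k s y)"
proof (induction k arbitrary: S y)
  case 0
  then show ?case by simp
next
  case (Suc k)
  have cont: "continuous_on {0..S'} (\<lambda>r. Q (picard_iterate Q f k r) y)" for S'
    by (rule continuous_on_Q_comp) (rule Suc.IH)
  have "continuous_on {0..S} (\<lambda>s. integral {0..s} (\<lambda>r. Q (picard_iterate Q f k r) y))"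
    by (rule continuous_on_if_has_real_derivative_atLeast[OF integral_has_real_derivative_atLeast[OF cont]])
  then show ?case by (simp add: continuous_intros)
qed

lemma Q_picard_iterate_integrable: "(\<lambda>r. Q (picard_iterate Q f k r) y) integrable_on {0..s}"
  by (intro integrable_continuous_interval continuous_on_Q_comp[OF continuous_on_picard_iterate])

lemma picard_iterate_step_bound:
  assumes "0 \<le> s"
  shows "(\<Sum>y\<in>UNIV. \<bar>picard_iterate Q f (Suc k) s y - picard_iterate Q f k s y\<bar>)
    \<le> (\<Sum>y\<in>UNIV. \<bar>Q f y\<bar>) * (rate_bound Q * CARD('x)) ^ k * s ^ Suc k / fact (Suc k)"
  using assms
proof (induction k arbitrary: s)
  case 0
  then show ?case by (simp add: sum_distrib_left abs_mult mult.commute)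
next
  case (Suc k)
  define C where "C = (\<Sum>y\<in>UNIV. \<bar>Q f y\<bar>) * (rate_bound Q * CARD('x)) ^ k / fact (Suc k)"
  define dist_k where "dist_k r = (\<Sum>z\<in>UNIV. \<bar>picard_iterate Q f (Suc k) r z - picard_iterate Q f k r z\<bar>)" for r
  have cont: "continuous_on {0..s} (\<lambda>r. rate_bound Q * dist_k r)"
    unfolding dist_k_def by (intro continuous_intros continuous_on_picard_iterate)
  have "\<bar>picard_iterate Q f (Suc (Suc k)) s y - picard_iterate Q f (Suc k) s y\<bar>
      \<le> rate_bound Q * C * (s ^ Suc (Suc k) / Suc (Suc k))" for y
  proof -
    have "\<bar>picard_iterate Q f (Suc (Suc k)) s y - picard_iterate Q f (Suc k) s y\<bar>
        = \<bar>integral {0..s} (\<lambda>r. Q (picard_iterate Q f (Suc k) r) y - Q (picard_iterate Q f k r) y)\<bar>"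
      by (simp add: integral_diff Q_picard_iterate_integrable)
    also have "\<dots> \<le> integral {0..s} (\<lambda>r. rate_bound Q * dist_k r)"
      using integral_norm_bound_integral[OF integrable_diff[OF Q_picard_iterate_integrable
            Q_picard_iterate_integrable] integrable_continuous_interval[OF cont]] Q_lipschitz[OF Q]
      unfolding dist_k_def real_norm_def by blast
    also have "\<dots> \<le> rate_bound Q * C * (s ^ Suc (Suc k) / Suc (Suc k))"
    proof (rule integral_le_power)
      fix r assume "r \<in> {0..s}"
      then have "dist_k r \<le> C * r ^ Suc k"
        using Suc.IH[of r] unfolding dist_k_def C_def by auto
      then show "rate_bound Q * dist_k r \<le> rate_bound Q * C * r ^ Suc k"
        using rate_bound_nonneg[OF Q] by (simp add: mult_left_mono mult.assoc)
    qed (use Suc.prems cont integrable_continuous_interval in auto)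
    finally show ?thesis .
  qed
  then have "(\<Sum>y\<in>UNIV. \<bar>picard_iterate Q f (Suc (Suc k)) s y - picard_iterate Q f (Suc k) s y\<bar>)
      \<le> (\<Sum>y\<in>(UNIV::'x set). rate_bound Q * C * (s ^ Suc (Suc k) / Suc (Suc k)))"
    by (rule sum_mono)
  also have "\<dots> = (\<Sum>y\<in>UNIV. \<bar>Q f y\<bar>) * (rate_bound Q * CARD('x)) ^ Suc k
      * s ^ Suc (Suc k) / fact (Suc (Suc k))"
    by (simp add: C_def field_simps)
  finally show ?case .
qed

lemma uniform_limit_picard_iterate:
  "uniform_limit {0..S} (\<lambda>n s. picard_iterate Q f n s y) (\<lambda>s. picard_limit Q f s y) sequentially"
proof -
  define C where "C = (\<Sum>y\<in>UNIV. \<bar>Q f y\<bar>)"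
  define L where "L = rate_bound Q * CARD('x)"
  have "0 \<le> C" "0 \<le> L" unfolding C_def L_def using rate_bound_nonneg[OF Q] by auto
  have "norm (picard_iterate Q f (Suc j) s y - picard_iterate Q f j s y) \<le> C * S * ((L * S) ^ j / fact j)"
    if s: "s \<in> {0..S}" for j s
  proof -
    have "norm (picard_iterate Q f (Suc j) s y - picard_iterate Q f j s y)
        \<le> (\<Sum>y\<in>UNIV. \<bar>picard_iterate Q f (Suc j) s y - picard_iterate Q f j s y\<bar>)"
      unfolding real_norm_def by (rule member_le_sum) auto
    also have "\<dots> \<le> C * L ^ j * s ^ Suc j / fact (Suc j)"
      unfolding C_def L_def by (rule picard_iterate_step_bound) (use s in auto)
    also have "\<dots> \<le> C * L ^ j * S ^ Suc j / fact j"
      using s \<open>0 \<le> C\<close> \<open>0 \<le> L\<close>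
      by (intro frac_le mult_left_mono power_mono fact_mono) auto
    also have "\<dots> = C * S * ((L * S) ^ j / fact j)"
      by (simp add: power_mult_distrib)
    finally show ?thesis .
  qed
  moreover have "summable (\<lambda>j. C * S * ((L * S) ^ j / fact j))"
    using summable_mult[OF summable_exp, of "C * S" "L * S"] by (simp add: field_simps)
  ultimately have "uniform_limit {0..S} (\<lambda>n s. f y + (\<Sum>i<n. picard_iterate Q f (Suc i) s y - picard_iterate Q f i s y))
      (\<lambda>s. picard_limit Q f s y) sequentially"
    unfolding picard_limit_def by (intro uniform_limit_add uniform_limit_const Weierstrass_m_test)
  moreover have "f y + (\<Sum>i<n. picard_iterate Q f (Suc i) s y - picard_iterate Q f i s y)
      = picard_iterate Q f n s y" for n s
    by (subst sum_lessThan_telescope[where f="\<lambda>i. picard_iterate Q f i s y"]) simp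
  ultimately show ?thesis by (simp only:)
qed

lemma continuous_on_picard_limit: "continuous_on {0..S} (\<lambda>s. picard_limit Q f s y)"
  by (rule uniform_limit_theorem[OF _ uniform_limit_picard_iterate])
    (auto intro!: always_eventually continuous_on_picard_iterate)

lemma picard_limit_integral_equation:
  assumes "0 \<le> s"
  shows "picard_limit Q f s y = f y + integral {0..s} (\<lambda>r. Q (picard_limit Q f r) y)"
proof -
  obtain I J where I: "\<And>n. ((\<lambda>r. Q (picard_iterate Q f n r) y) has_integral I n) {0..s}"
    and J: "((\<lambda>r. Q (picard_limit Q f r) y) has_integral J) {0..s}" and "I \<longlonglongrightarrow> J"
    by (rule uniform_limit_integral[OF uniform_limit_Q_comp[where g="picard_iterate Q f"
            and h="picard_limit Q f", OF uniform_limit_picard_iterate]])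
      (auto intro: continuous_on_Q_comp[OF continuous_on_picard_iterate])
  have "(\<lambda>n. picard_iterate Q f (Suc n) s y) \<longlonglongrightarrow> picard_limit Q f s y"
    using tendsto_uniform_limitI[OF uniform_limit_picard_iterate[where S=s], of s] assms
    by (intro LIMSEQ_Suc) simp
  moreover have "(\<lambda>n. picard_iterate Q f (Suc n) s y) = (\<lambda>n. f y + I n)"
    using I by (auto simp: integral_unique)
  moreover have "(\<lambda>n. f y + I n) \<longlonglongrightarrow> f y + J"
    by (intro tendsto_intros \<open>I \<longlonglongrightarrow> J\<close>)
  ultimately have "picard_limit Q f s y = f y + J" using LIMSEQ_unique by metis
  then show ?thesis using J by (simp add: integral_unique)
qed

lemma picard_limit_solution: "is_lower_solution Q f (picard_limit Q f)"
  unfolding is_lower_solution_def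
proof (intro conjI allI impI)
  show "picard_limit Q f 0 = f"
    using picard_limit_integral_equation[of 0] by (auto simp: fun_eq_iff)
  fix s :: real and x assume "0 \<le> s"
  have "((\<lambda>u. f x + integral {0..u} (\<lambda>r. Q (picard_limit Q f r) x)) has_real_derivative
      Q (picard_limit Q f s) x) (at s within {0..})"
    using integral_has_real_derivative_atLeast[OF continuous_on_Q_comp[OF continuous_on_picard_limit] \<open>0 \<le> s\<close>]
    by (auto intro!: derivative_eq_intros)
  then show "((\<lambda>r. picard_limit Q f r x) has_real_derivative Q (picard_limit Q f s) x) (at s within {0..})"
    by (rule has_field_derivative_transform_within[where d=1])
      (use \<open>0 \<le> s\<close> picard_limit_integral_equation in auto)
qed

end

section \<open>Lower transition operators\<close>

locale lower_transition_operator =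
  fixes T :: "('x::finite \<Rightarrow> real) \<Rightarrow> ('x \<Rightarrow> real)"
  assumes monotone: "(\<And>x. f x \<le> g x) \<Longrightarrow> T f x \<le> T g x"
    and add_const: "T (\<lambda>z. f z + c) = (\<lambda>x. T f x + c)"
    and superadditive: "T f x + T g x \<le> T (\<lambda>z. f z + g z) x"
    and pos_homogeneous: "0 \<le> l \<Longrightarrow> T (\<lambda>z. l * f z) = (\<lambda>x. l * T f x)"
begin

lemma const: "T (\<lambda>_. c) = (\<lambda>_. c)"
  using add_const[of "\<lambda>_. 0" c] pos_homogeneous[of 0 "\<lambda>_. 0"] by simp

lemma ge_const: "(\<And>z. c \<le> f z) \<Longrightarrow> c \<le> T f x"
  using monotone[of "\<lambda>_. c" f x] const by simp

lemma le_const: "(\<And>z. f z \<le> c) \<Longrightarrow> T f x \<le> c"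
  using monotone[of f "\<lambda>_. c" x] const by simp

lemma sum_superadditive: "finite A \<Longrightarrow> (\<Sum>y\<in>A. T (u y) x) \<le> T (\<lambda>z. \<Sum>y\<in>A. u y z) x"
proof (induction A rule: finite_induct)
  case empty
  then show ?case using const[of 0] by simp
next
  case (insert a A)
  then have "(\<Sum>y\<in>insert a A. T (u y) x) \<le> T (u a) x + T (\<lambda>z. \<Sum>y\<in>A. u y z) x" by simp
  also have "\<dots> \<le> T (\<lambda>z. \<Sum>y\<in>insert a A. u y z) x" using superadditive insert by simp
  finally show ?case .
qed

lemma upper_const: "upper_op T (\<lambda>_. c) = (\<lambda>_. c)"
  unfolding upper_op_def using const[of "-c"] by simp

lemma upper_mono: "(\<And>x. f x \<le> g x) \<Longrightarrow> upper_op T f x \<le> upper_op T g x"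
  unfolding upper_op_def using monotone[of "\<lambda>z. - g z" "\<lambda>z. - f z" x] by simp

lemma upper_ge_const: "(\<And>z. c \<le> f z) \<Longrightarrow> c \<le> upper_op T f x"
  using upper_mono[of "\<lambda>_. c" f x] upper_const by simp

lemma upper_pos_homogeneous: "0 \<le> l \<Longrightarrow> upper_op T (\<lambda>z. l * f z) = (\<lambda>x. l * upper_op T f x)"
  unfolding upper_op_def using pos_homogeneous[of l "\<lambda>z. - f z"] by simp

lemma upper_sum_subadditive:
  "finite A \<Longrightarrow> upper_op T (\<lambda>z. \<Sum>y\<in>A. u y z) x \<le> (\<Sum>y\<in>A. upper_op T (u y) x)"
  unfolding upper_op_def using sum_superadditive[of A "\<lambda>y z. - u y z" x] by (simp add: sum_negf)

lemma upper_one_minus: "upper_op T (\<lambda>z. 1 - g z) x = 1 - T g x"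
  unfolding upper_op_def using add_const[of g "-1"] by simp

lemma upper_ind_le_sum: "upper_op T (ind C) x \<le> (\<Sum>y\<in>C. upper_op T (ind {y}) x)"
proof -
  have "ind C = (\<lambda>z. \<Sum>y\<in>C. ind {y} z)"
    using ind_eq_sum_singletons[of C] by auto
  then show ?thesis using upper_sum_subadditive[of C "\<lambda>y. ind {y}" x] by simp
qed

end

lemma lower_transition_operator_comp:
  assumes "lower_transition_operator S" "lower_transition_operator T"
  shows "lower_transition_operator (S \<circ> T)"
proof -
  interpret S: lower_transition_operator S by fact
  interpret T: lower_transition_operator T by fact
  show ?thesis
  proof
    fix f g x
    show "(\<And>x. f x \<le> g x) \<Longrightarrow> (S \<circ> T) f x \<le> (S \<circ> T) g x"
      by (simp add: S.monotone T.monotone)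
    have "S (\<lambda>z. T f z + T g z) x \<le> S (T (\<lambda>z. f z + g z)) x"
      by (rule S.monotone) (rule T.superadditive)
    then show "(S \<circ> T) f x + (S \<circ> T) g x \<le> (S \<circ> T) (\<lambda>z. f z + g z) x"
      using S.superadditive[of "T f" x "T g"] by simp
  qed (simp_all add: S.add_const T.add_const S.pos_homogeneous T.pos_homogeneous)
qed

lemma lower_transition_operator_funpow:
  assumes "lower_transition_operator T"
  shows "lower_transition_operator (T ^^ n)"
proof (induction n)
  case 0
  show ?case by unfold_locales auto
next
  case (Suc n)
  show ?case
    unfolding funpow.simps(2) by (rule lower_transition_operator_comp[OF assms Suc.IH])
qed

lemma funpow_upper_op: "(upper_op T ^^ n) f = upper_op (T ^^ n) f"
  by (induction n arbitrary: f) (simp_all add: upper_op_def)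

lemma upper_op_comp: "upper_op S (upper_op T f) = upper_op (S \<circ> T) f"
  by (simp add: upper_op_def)

section \<open>The lower transition operators of a rate operator\<close>

context
  fixes Q :: "('x::finite \<Rightarrow> real) \<Rightarrow> ('x \<Rightarrow> real)"
  assumes Q: "lower_transition_rate_operator Q"
begin

text \<open>The weight exp (K s), with K the rate bound, turns a supersolution into a function
  whose negative mass grows at most linearly in itself.\<close>
lemma nonneg_if_supersolution:
  fixes \<phi> \<phi>' :: "real \<Rightarrow> 'x \<Rightarrow> real"
  assumes deriv: "\<And>s x. 0 \<le> s \<Longrightarrow> ((\<lambda>r. \<phi> r x) has_real_derivative \<phi>' s x) (at s within {0..})"
    and super: "\<And>s x. 0 \<le> s \<Longrightarrow> Q (\<phi> s) x \<le> \<phi>' s x" and init: "\<And>x. 0 \<le> \<phi> 0 x" and "0 \<le> s"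
  shows "0 \<le> \<phi> s x"
proof -
  define K where "K = rate_bound Q"
  have "0 \<le> K" unfolding K_def by (rule rate_bound_nonneg[OF Q])
  define \<psi> where "\<psi> r y = exp (K * r) * \<phi> r y" for r y
  have "0 \<le> \<psi> s x"
  proof (rule nonneg_if_derivative_ge_neg_mass[where \<psi>=\<psi>])
    fix r :: real and y assume "0 \<le> r"
    show "((\<lambda>r. \<psi> r y) has_real_derivative exp (K * r) * (K * \<phi> r y + \<phi>' r y)) (at r within {0..})"
      unfolding \<psi>_def using deriv[OF \<open>0 \<le> r\<close>]
      by (auto intro!: derivative_eq_intros simp: algebra_simps)
    have "exp (K * r) * (\<Sum>z\<in>UNIV. max 0 (- \<phi> r z)) = (\<Sum>z\<in>UNIV. max 0 (- \<psi> r z))"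
      unfolding sum_distrib_left \<psi>_def
      by (intro sum.cong refl) (simp add: max_mult_distrib_left)
    moreover have "- 2 * K * (\<Sum>z\<in>UNIV. max 0 (- \<phi> r z)) \<le> K * \<phi> r y + \<phi>' r y"
      using Q_ge_neg_part[OF Q, of "\<phi> r" y] super[OF \<open>0 \<le> r\<close>, of y] unfolding K_def by linarith
    then have "exp (K * r) * (- 2 * K * (\<Sum>z\<in>UNIV. max 0 (- \<phi> r z)))
        \<le> exp (K * r) * (K * \<phi> r y + \<phi>' r y)"
      by (rule mult_left_mono) simp
    ultimately show "- (2 * K) * (\<Sum>z\<in>UNIV. max 0 (- \<psi> r z)) \<le> exp (K * r) * (K * \<phi> r y + \<phi>' r y)"
      by (simp add: algebra_simps)
  qed (use \<open>0 \<le> K\<close> \<open>0 \<le> s\<close> init in \<open>auto simp: \<psi>_def\<close>)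
  then show ?thesis unfolding \<psi>_def by (simp add: zero_le_mult_iff)
qed

lemma subsolution_le_solution:
  assumes u: "is_lower_solution Q f u"
    and deriv: "\<And>s x. 0 \<le> s \<Longrightarrow> ((\<lambda>r. w r x) has_real_derivative w' s x) (at s within {0..})"
    and sub: "\<And>s x. 0 \<le> s \<Longrightarrow> w' s x \<le> Q (w s) x"
    and init: "\<And>x. w 0 x \<le> f x" and "0 \<le> s"
  shows "w s x \<le> u s x"
proof -
  have "0 \<le> u s x - w s x"
  proof (rule nonneg_if_supersolution[where \<phi>="\<lambda>r y. u r y - w r y" and \<phi>'="\<lambda>r y. Q (u r) y - w' r y"])
    fix s :: real and x assume "0 \<le> s"
    show "((\<lambda>r. u r x - w r x) has_real_derivative Q (u s) x - w' s x) (at s within {0..})"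
      using u \<open>0 \<le> s\<close> unfolding is_lower_solution_def by (auto intro!: derivative_eq_intros deriv)
    show "Q (\<lambda>y. u s y - w s y) x \<le> Q (u s) x - w' s x"
      using Q_superadd[OF Q, of "w s" x "\<lambda>z. u s z - w s z"] sub[OF \<open>0 \<le> s\<close>, of x] by simp
  qed (use u init \<open>0 \<le> s\<close> in \<open>auto simp: is_lower_solution_def\<close>)
  then show ?thesis by simp
qed

lemma lower_T_eq_solution:
  assumes g: "is_lower_solution Q f g" and "0 \<le> s"
  shows "lower_T Q s f = g s"
  unfolding lower_T_def
proof (rule the_equality)
  show "\<exists>g'. is_lower_solution Q f g' \<and> g' s = g s" using g by blast
next
  fix h assume "\<exists>g'. is_lower_solution Q f g' \<and> g' s = h"
  then obtain g' where g': "is_lower_solution Q f g'" and "h = g' s" by blast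
  have deriv: "((\<lambda>r. u r x) has_real_derivative Q (u r) x) (at r within {0..})"
    if "is_lower_solution Q f u" "0 \<le> r" for u r x
    using that unfolding is_lower_solution_def by blast
  have "g' s x \<le> g s x" "g s x \<le> g' s x" for x
    using g g' \<open>0 \<le> s\<close>
    by (auto intro: subsolution_le_solution[OF g deriv[OF g']] subsolution_le_solution[OF g' deriv[OF g]]
        simp: is_lower_solution_def)
  then show "h = g s" using \<open>h = g' s\<close> by (simp add: fun_eq_iff antisym)
qed

lemma lower_T_eq_picard_limit: "0 \<le> s \<Longrightarrow> lower_T Q s f = picard_limit Q f s"
  by (rule lower_T_eq_solution[OF picard_limit_solution[OF Q]])

lemma lower_T_solution: "is_lower_solution Q f (\<lambda>s. lower_T Q s f)"
  unfolding is_lower_solution_def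
proof (intro conjI allI impI)
  have sol: "is_lower_solution Q f (picard_limit Q f)" by (rule picard_limit_solution[OF Q])
  then show "lower_T Q 0 f = f"
    using lower_T_eq_picard_limit[of 0] by (simp add: is_lower_solution_def)
  fix s :: real and x assume "0 \<le> s"
  with sol have "((\<lambda>r. picard_limit Q f r x) has_real_derivative Q (lower_T Q s f) x) (at s within {0..})"
    by (simp add: is_lower_solution_def lower_T_eq_picard_limit)
  then show "((\<lambda>r. lower_T Q r f x) has_real_derivative Q (lower_T Q s f) x) (at s within {0..})"
    by (rule has_field_derivative_transform_within[where d=1])
      (use \<open>0 \<le> s\<close> lower_T_eq_picard_limit in auto)
qed

lemma lower_T_derivative:
  "0 \<le> s \<Longrightarrow> ((\<lambda>r. lower_T Q r f x) has_real_derivative Q (lower_T Q s f) x) (at s within {0..})"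
  using lower_T_solution unfolding is_lower_solution_def by blast

lemma lower_T_0: "lower_T Q 0 f = f"
  using lower_T_solution unfolding is_lower_solution_def by blast

lemma lower_T_is_lower_transition_operator:
  assumes "0 \<le> t"
  shows "lower_transition_operator (lower_T Q t)"
proof
  fix f g :: "'x \<Rightarrow> real" and x
  show "lower_T Q t f x \<le> lower_T Q t g x" if "\<And>x. f x \<le> g x"
    using that assms by (intro subsolution_le_solution[OF lower_T_solution lower_T_derivative])
      (auto simp: lower_T_0)
  show "lower_T Q t f x + lower_T Q t g x \<le> lower_T Q t (\<lambda>z. f z + g z) x"
    using assms
    by (intro subsolution_le_solution[OF lower_T_solution, where w'="\<lambda>r x. Q (lower_T Q r f) x + Q (lower_T Q r g) x"])
      (auto intro!: derivative_eq_intros lower_T_derivative Q_superadd[OF Q] simp: lower_T_0)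
next
  fix f :: "'x \<Rightarrow> real" and c :: real
  have "is_lower_solution Q (\<lambda>z. f z + c) (\<lambda>r x. lower_T Q r f x + c)"
    unfolding is_lower_solution_def Q_add_const[OF Q]
    by (auto intro!: derivative_eq_intros lower_T_derivative simp: lower_T_0)
  then show "lower_T Q t (\<lambda>z. f z + c) = (\<lambda>x. lower_T Q t f x + c)"
    using assms by (rule lower_T_eq_solution)
next
  fix f :: "'x \<Rightarrow> real" and l :: real assume "0 \<le> l"
  then have "is_lower_solution Q (\<lambda>z. l * f z) (\<lambda>r x. l * lower_T Q r f x)"
    unfolding is_lower_solution_def Q_pos_hom[OF Q \<open>0 \<le> l\<close>]
    by (auto intro!: derivative_eq_intros lower_T_derivative simp: lower_T_0)
  then show "lower_T Q t (\<lambda>z. l * f z) = (\<lambda>x. l * lower_T Q t f x)"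
    using assms by (rule lower_T_eq_solution)
qed

lemma lower_T_semigroup:
  assumes "0 \<le> r" "0 \<le> s"
  shows "lower_T Q s (lower_T Q r f) = lower_T Q (s + r) f"
proof -
  have "is_lower_solution Q (lower_T Q r f) (\<lambda>u. lower_T Q (u + r) f)"
    unfolding is_lower_solution_def
  proof (intro conjI allI impI)
    fix s :: real and x assume "0 \<le> s"
    have "((\<lambda>v. lower_T Q v f x) has_real_derivative Q (lower_T Q (s + r) f) x)
        (at ((\<lambda>u. u + r) s) within ((\<lambda>u. u + r) ` {0..}))"
      using \<open>0 \<le> r\<close> \<open>0 \<le> s\<close> by (intro DERIV_subset[OF lower_T_derivative]) auto
    then have "((\<lambda>v. lower_T Q v f x) \<circ> (\<lambda>u. u + r) has_real_derivative Q (lower_T Q (s + r) f) x * 1)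
        (at s within {0..})"
      by (rule DERIV_image_chain) (auto intro!: derivative_eq_intros)
    then show "((\<lambda>u. lower_T Q (u + r) f x) has_real_derivative Q (lower_T Q (s + r) f) x) (at s within {0..})"
      by (simp add: o_def)
  qed simp
  then show ?thesis using \<open>0 \<le> s\<close> by (rule lower_T_eq_solution)
qed

lemma funpow_lower_T: "0 \<le> t \<Longrightarrow> (lower_T Q t ^^ n) f = lower_T Q (n * t) f"
proof (induction n)
  case 0
  then show ?case by (simp add: lower_T_0)
next
  case (Suc n)
  then show ?case using lower_T_semigroup[of "n * t" t f] by (simp add: algebra_simps)
qed

lemma lower_T_between:
  assumes "0 \<le> r" "r \<le> s" and bounds: "\<And>z. lo \<le> lower_T Q r f z \<and> lower_T Q r f z \<le> hi"
  shows "lo \<le> lower_T Q s f x \<and> lower_T Q s f x \<le> hi"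
proof -
  interpret lower_transition_operator "lower_T Q (s - r)"
    using assms by (intro lower_T_is_lower_transition_operator) simp
  have "lower_T Q s f = lower_T Q (s - r) (lower_T Q r f)"
    using lower_T_semigroup[of r "s - r" f] assms by simp
  then show ?thesis using bounds by (simp add: ge_const le_const)
qed

end

section \<open>Regular absorption\<close>

lemma RA_set_iff:
  fixes T :: "('x::finite \<Rightarrow> real) \<Rightarrow> ('x \<Rightarrow> real)"
  shows "y \<in> RA_set T \<longleftrightarrow> (\<exists>n\<ge>1. \<forall>x. 0 < upper_op (T ^^ n) (ind {y}) x)"
  unfolding RA_set_def by (simp add: funpow_upper_op)

lemma RA_set_meets_if_upper_ge_one:
  fixes T :: "('x::finite \<Rightarrow> real) \<Rightarrow> ('x \<Rightarrow> real)"
  assumes T: "lower_transition_operator T"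
    and conv: "\<And>f. \<exists>c. \<forall>x. (\<lambda>n. (T ^^ n) f x) \<longlonglongrightarrow> c"
    and one: "\<forall>\<^sub>F n in sequentially. 1 \<le> upper_op (T ^^ n) (ind C) x"
  shows "\<exists>y\<in>C. y \<in> RA_set T"
proof -
  obtain lim where lim: "\<And>f x. (\<lambda>n. (T ^^ n) f x) \<longlonglongrightarrow> lim f"
    using conv by metis
  define a where "a y = - lim (\<lambda>z. - ind {y} z)" for y
  have upper_lim: "(\<lambda>n. upper_op (T ^^ n) (ind {y}) x) \<longlonglongrightarrow> a y" for y x
    unfolding upper_op_def a_def by (intro tendsto_minus lim)
  have "\<forall>\<^sub>F n in sequentially. 1 \<le> (\<Sum>y\<in>C. upper_op (T ^^ n) (ind {y}) x)"
    using one by eventually_elim (use lower_transition_operator.upper_ind_le_sum[OF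
          lower_transition_operator_funpow[OF T]] in \<open>meson order_trans\<close>)
  then have "1 \<le> (\<Sum>y\<in>C. a y)"
    by (intro tendsto_le[OF trivial_limit_sequentially tendsto_sum[OF upper_lim] tendsto_const])
  then obtain y where "y \<in> C" "0 < a y"
    by (metis not_less sum_nonpos zero_less_one order_less_le_trans)
  then have "\<forall>\<^sub>F n in sequentially. \<forall>x. 0 < upper_op (T ^^ n) (ind {y}) x"
    by (intro eventually_all_finite order_tendstoD(1)[OF upper_lim])
  then obtain N where "\<forall>n\<ge>N. \<forall>x. 0 < upper_op (T ^^ n) (ind {y}) x"
    unfolding eventually_sequentially by blast
  then have "y \<in> RA_set T"
    unfolding RA_set_iff by (intro exI[of _ "Suc N"]) (auto simp del: funpow.simps)
  with \<open>y \<in> C\<close> show ?thesis by blast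
qed

theorem regularly_absorbing_if_convergent:
  fixes T :: "('x::finite \<Rightarrow> real) \<Rightarrow> ('x \<Rightarrow> real)"
  assumes T: "lower_transition_operator T"
    and conv: "\<And>f. \<exists>c. \<forall>x. (\<lambda>n. (T ^^ n) f x) \<longlonglongrightarrow> c"
  shows "regularly_absorbing T"
  unfolding regularly_absorbing_def
proof
  have "upper_op (T ^^ n) (ind UNIV) x = 1" for n x
    using lower_transition_operator.upper_const[OF lower_transition_operator_funpow[OF T]]
    by (simp add: ind_UNIV)
  then show "RA_set T \<noteq> {}"
    using RA_set_meets_if_upper_ge_one[OF T conv, of UNIV undefined] by auto
next
  let ?R = "RA_set T"
  show "\<forall>x. x \<notin> ?R \<longrightarrow> (\<exists>n\<ge>1. 0 < (T ^^ n) (ind ?R) x)"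
  proof (intro allI impI; rule ccontr)
    fix x assume "x \<notin> ?R" and "\<not> (\<exists>n\<ge>1. 0 < (T ^^ n) (ind ?R) x)"
    then have "upper_op (T ^^ n) (ind (- ?R)) x \<ge> 1" if "n \<ge> 1" for n
      using that lower_transition_operator.upper_one_minus[OF lower_transition_operator_funpow[OF T]]
      by (auto simp: ind_Compl not_less)
    then have "\<exists>y\<in>- ?R. y \<in> ?R"
      by (intro RA_set_meets_if_upper_ge_one[OF T conv]) (auto simp: eventually_sequentially)
    then show False by blast
  qed
qed

context
  fixes T :: "('x::finite \<Rightarrow> real) \<Rightarrow> ('x \<Rightarrow> real)"
  assumes T: "lower_transition_operator T"
begin

interpretation lower_transition_operator T by (rule T)

lemma RA_set_closed:
  assumes "y \<in> RA_set T" "w \<notin> RA_set T"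
  shows "upper_op T (ind {w}) y \<le> 0"
proof (rule ccontr)
  define \<delta> where "\<delta> = upper_op T (ind {w}) y"
  assume "\<not> upper_op T (ind {w}) y \<le> 0"
  then have "0 < \<delta>" unfolding \<delta>_def by simp
  obtain n where "n \<ge> 1" and pos: "\<forall>x. 0 < upper_op (T ^^ n) (ind {y}) x"
    using assms(1) unfolding RA_set_iff by blast
  have "\<delta> * ind {y} z \<le> upper_op T (ind {w}) z" for z
    using upper_ge_const[of 0 "ind {w}" z] by (auto simp: \<delta>_def ind_def)
  moreover have "upper_op (T ^^ Suc n) (ind {w}) = upper_op (T ^^ n) (upper_op T (ind {w}))"
    by (simp only: funpow_Suc_right upper_op_comp)
  ultimately have "\<delta> * upper_op (T ^^ n) (ind {y}) x \<le> upper_op (T ^^ Suc n) (ind {w}) x" for x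
    using lower_transition_operator.upper_mono[OF lower_transition_operator_funpow[OF T]]
      lower_transition_operator.upper_pos_homogeneous[OF lower_transition_operator_funpow[OF T], of \<delta>]
      \<open>0 < \<delta>\<close> by (metis less_imp_le)
  then have "\<forall>x. 0 < upper_op (T ^^ Suc n) (ind {w}) x"
    using pos \<open>0 < \<delta>\<close> by (meson mult_pos_pos order_less_le_trans)
  then have "w \<in> RA_set T" unfolding RA_set_iff by (auto intro!: exI[of _ "Suc n"] simp del: funpow.simps)
  with assms(2) show False by simp
qed

lemma ind_RA_set_le: "ind (RA_set T) x \<le> T (ind (RA_set T)) x"
proof (cases "x \<in> RA_set T")
  case True
  have "1 - T (ind (RA_set T)) x = upper_op T (ind (- RA_set T)) x"
    by (simp add: ind_Compl upper_one_minus)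
  also have "\<dots> \<le> (\<Sum>w\<in>- RA_set T. upper_op T (ind {w}) x)" by (rule upper_ind_le_sum)
  also have "\<dots> \<le> 0" using RA_set_closed[OF True] by (intro sum_nonpos) auto
  finally show ?thesis using True by (simp add: ind_def)
next
  case False
  then show ?thesis using ge_const[of 0 "ind (RA_set T)" x] by (simp add: ind_def ind_nonneg)
qed

lemma incseq_funpow_ind_RA_set: "incseq (\<lambda>m. (T ^^ m) (ind (RA_set T)) x)"
proof (rule incseq_SucI)
  fix m
  show "(T ^^ m) (ind (RA_set T)) x \<le> (T ^^ Suc m) (ind (RA_set T)) x"
    unfolding funpow_Suc_right o_def
    by (intro lower_transition_operator.monotone[OF lower_transition_operator_funpow[OF T]] ind_RA_set_le)
qed

lemma eventually_upper_funpow_pos: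
  assumes "y \<in> RA_set T"
  shows "\<forall>\<^sub>F m in sequentially. \<forall>x. 0 < upper_op (T ^^ m) (ind {y}) x"
proof -
  obtain n where pos: "\<forall>x. 0 < upper_op (T ^^ n) (ind {y}) x"
    using assms unfolding RA_set_iff by blast
  have "0 < upper_op (T ^^ m) (ind {y}) x" if "n \<le> m" for m x
  proof -
    have "Min (range (upper_op (T ^^ n) (ind {y}))) \<le> upper_op (T ^^ (m - n)) (upper_op (T ^^ n) (ind {y})) x"
      by (rule lower_transition_operator.upper_ge_const[OF lower_transition_operator_funpow[OF T]]) simp
    moreover have "upper_op (T ^^ (m - n)) (upper_op (T ^^ n) (ind {y})) = upper_op (T ^^ m) (ind {y})"
      using that by (simp add: upper_op_comp funpow_add[symmetric])
    moreover have "0 < Min (range (upper_op (T ^^ n) (ind {y})))" using pos by simp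
    ultimately show ?thesis by (metis order_less_le_trans)
  qed
  then show ?thesis unfolding eventually_sequentially by blast
qed

lemma eventually_funpow_ind_RA_set_pos:
  assumes "regularly_absorbing T"
  shows "\<forall>\<^sub>F m in sequentially. 0 < (T ^^ m) (ind (RA_set T)) x"
proof -
  obtain n where "0 < (T ^^ n) (ind (RA_set T)) x"
    using assms unfolding regularly_absorbing_def by (metis funpow_0 ind_def less_numeral_extra(1))
  then show ?thesis
    unfolding eventually_sequentially
    using incseq_funpow_ind_RA_set[unfolded incseq_def] by (meson order_less_le_trans)
qed

lemma regularly_absorbing_uniform_positivity:
  assumes RA: "regularly_absorbing T"
  obtains N \<epsilon> where "N \<ge> 1" "0 < \<epsilon>"
    "\<And>y x. y \<in> RA_set T \<Longrightarrow> \<epsilon> \<le> upper_op (T ^^ N) (ind {y}) x"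
    "\<And>x. \<epsilon> \<le> (T ^^ N) (ind (RA_set T)) x"
proof -
  let ?R = "RA_set T"
  have "\<forall>\<^sub>F m in sequentially. 1 \<le> m \<and> (\<forall>y\<in>?R. \<forall>x. 0 < upper_op (T ^^ m) (ind {y}) x)
      \<and> (\<forall>x. 0 < (T ^^ m) (ind ?R) x)"
    by (intro eventually_conj eventually_ball_finite eventually_all_finite ballI
        eventually_upper_funpow_pos eventually_funpow_ind_RA_set_pos[OF RA])
      (auto simp: eventually_sequentially)
  then obtain N where "N \<ge> 1" and U: "\<forall>y\<in>?R. \<forall>x. 0 < upper_op (T ^^ N) (ind {y}) x"
    and L: "\<forall>x. 0 < (T ^^ N) (ind ?R) x"
    unfolding eventually_sequentially by blast
  define V where "V = (\<lambda>(y, x). upper_op (T ^^ N) (ind {y}) x) ` (?R \<times> UNIV) \<union> range ((T ^^ N) (ind ?R))"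
  have "finite V" "V \<noteq> {}" unfolding V_def by auto
  show ?thesis
  proof (rule that[OF \<open>N \<ge> 1\<close>, of "Min V"])
    show "0 < Min V" using \<open>finite V\<close> \<open>V \<noteq> {}\<close> U L unfolding V_def by auto
    show "Min V \<le> upper_op (T ^^ N) (ind {y}) x" if "y \<in> ?R" for y x
      using \<open>finite V\<close> that unfolding V_def by (intro Min_le) (auto intro!: image_eqI[of _ _ "(y, x)"])
    show "Min V \<le> (T ^^ N) (ind ?R) x" for x
      using \<open>finite V\<close> unfolding V_def by (intro Min_le) auto
  qed
qed

end

section \<open>Contraction of the oscillation\<close>

definition oscillation :: "('x::finite \<Rightarrow> real) \<Rightarrow> real" where
  "oscillation h = Max (range h) - Min (range h)"

lemma oscillation_le:
  assumes "\<And>z. m \<le> h z \<and> h z \<le> M"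
  shows "oscillation h \<le> M - m"
proof -
  have "Max (range h) \<le> M" "m \<le> Min (range h)" using assms by auto
  then show ?thesis unfolding oscillation_def by linarith
qed

lemma (in lower_transition_operator) le_sub_upper_ind:
  assumes "\<And>z. h z \<le> M"
  shows "T h x \<le> M - (M - h y) * upper_op T (ind {y}) x"
proof -
  have "T h x \<le> T (\<lambda>z. (M - h y) * (- ind {y} z) + M) x"
    using assms by (intro monotone) (auto simp: ind_def)
  also have "\<dots> = M - (M - h y) * upper_op T (ind {y}) x"
    using add_const[of "\<lambda>z. (M - h y) * (- ind {y} z)" M]
      pos_homogeneous[of "M - h y" "\<lambda>z. - ind {y} z"] assms[of y]
    by (simp add: upper_op_def)
  finally show ?thesis .
qed

lemma (in lower_transition_operator) add_mult_ind_le: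
  assumes "0 \<le> d" "\<And>z. m \<le> h z" "\<And>z. z \<in> R \<Longrightarrow> m + d \<le> h z"
  shows "m + d * T (ind R) x \<le> T h x"
proof -
  have "m + d * T (ind R) x = T (\<lambda>z. d * ind R z + m) x"
    using add_const[of "\<lambda>z. d * ind R z" m] pos_homogeneous[OF \<open>0 \<le> d\<close>, of "ind R"] by simp
  also have "\<dots> \<le> T h x"
    using assms by (intro monotone) (auto simp: ind_def add.commute)
  finally show ?thesis .
qed

text \<open>If h is at most its midpoint at some state y of R, charging y pulls the maximum down;
  otherwise h exceeds its midpoint on all of R, and reaching R pushes the minimum up.\<close>
lemma (in lower_transition_operator) oscillation_contraction:
  assumes "0 < \<epsilon>" and U: "\<And>y x. y \<in> R \<Longrightarrow> \<epsilon> \<le> upper_op T (ind {y}) x"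
    and L: "\<And>x. \<epsilon> \<le> T (ind R) x"
  shows "oscillation (T h) \<le> (1 - \<epsilon> / 2) * oscillation h"
proof -
  define m where "m = Min (range h)"
  define M where "M = Max (range h)"
  define d where "d = (M - m) / 2"
  have bounds: "m \<le> h z" "h z \<le> M" for z unfolding m_def M_def by simp_all
  have "0 \<le> d" unfolding d_def using bounds(1)[of undefined] bounds(2)[of undefined] by simp
  have lo: "m \<le> T h x" and hi: "T h x \<le> M" for x
    using bounds by (auto intro: ge_const le_const)
  have "oscillation (T h) \<le> (M - \<epsilon> * d) - m \<or> oscillation (T h) \<le> M - (m + \<epsilon> * d)"
  proof (cases "\<exists>y\<in>R. h y \<le> m + d")
    case True
    then obtain y where "y \<in> R" "h y \<le> m + d" by blast
    then have "d \<le> M - h y" unfolding d_def by (simp add: field_simps)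
    then have charge: "d * \<epsilon> \<le> (M - h y) * upper_op T (ind {y}) x" for x
      using \<open>0 \<le> d\<close> \<open>0 < \<epsilon>\<close> U[OF \<open>y \<in> R\<close>, of x] by (intro mult_mono) auto
    have "T h x \<le> M - \<epsilon> * d" for x
      using le_sub_upper_ind[where h=h and M=M and x=x and y=y, OF bounds(2)] charge[of x] by (simp add: mult.commute)
    then show ?thesis using lo by (intro disjI1 oscillation_le) auto
  next
    case False
    have "m + \<epsilon> * d \<le> T h x" for x
      using add_mult_ind_le[where h=h and m=m and R=R and x=x, OF \<open>0 \<le> d\<close> bounds(1)] False L[of x] \<open>0 \<le> d\<close>
        mult_left_mono[of \<epsilon> "T (ind R) x" d]
      by (force simp: mult.commute)
    then show ?thesis using hi by (intro disjI2 oscillation_le) auto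
  qed
  then show ?thesis unfolding oscillation_def m_def[symmetric] M_def[symmetric] d_def
    by (auto simp: algebra_simps)
qed

theorem regularly_absorbing_oscillation_contraction:
  fixes T :: "('x::finite \<Rightarrow> real) \<Rightarrow> ('x \<Rightarrow> real)"
  assumes T: "lower_transition_operator T" and RA: "regularly_absorbing T"
  obtains N q where "N \<ge> 1" "0 \<le> q" "q < 1" "\<And>h. oscillation ((T ^^ N) h) \<le> q * oscillation h"
proof -
  obtain N \<epsilon> where "N \<ge> 1" "0 < \<epsilon>"
    and U: "\<And>y x. y \<in> RA_set T \<Longrightarrow> \<epsilon> \<le> upper_op (T ^^ N) (ind {y}) x"
    and L: "\<And>x. \<epsilon> \<le> (T ^^ N) (ind (RA_set T)) x"
    using regularly_absorbing_uniform_positivity[OF T RA] by blast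
  interpret TN: lower_transition_operator "T ^^ N" by (rule lower_transition_operator_funpow[OF T])
  have "(T ^^ N) (ind (RA_set T)) undefined \<le> 1" by (rule TN.le_const) (rule ind_le_one)
  then have "\<epsilon> \<le> 1" using L[of undefined] by linarith
  show ?thesis
    using that[OF \<open>N \<ge> 1\<close>, of "1 - \<epsilon> / 2"] \<open>0 < \<epsilon>\<close> \<open>\<epsilon> \<le> 1\<close>
      TN.oscillation_contraction[OF \<open>0 < \<epsilon>\<close> U L] by simp
qed

section \<open>Ergodicity\<close>

lemma tendsto_Sup_if_nested_bounds:
  fixes F :: "real \<Rightarrow> real" and a b :: "nat \<Rightarrow> real" and \<tau> :: real
  assumes "incseq a" "decseq b" and width: "(\<lambda>k. b k - a k) \<longlonglongrightarrow> 0"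
    and between: "\<And>k s. k * \<tau> \<le> s \<Longrightarrow> a k \<le> F s \<and> F s \<le> b k"
  shows "(F \<longlongrightarrow> (SUP k. a k)) at_top"
proof (rule tendstoI)
  fix e :: real assume "0 < e"
  have a_le_b: "a j \<le> b k" for j k
  proof -
    have "a j \<le> a (max j k)" using \<open>incseq a\<close> by (simp add: incseqD)
    also have "\<dots> \<le> b (max j k)" using between[of "max j k" "max j k * \<tau>"] by simp
    also have "\<dots> \<le> b k" using \<open>decseq b\<close> by (simp add: decseqD)
    finally show ?thesis .
  qed
  have "bdd_above (range a)" by (rule bdd_aboveI[where M="b 0"]) (use a_le_b in auto)
  then have "a k \<le> (SUP k. a k)" for k by (rule cSUP_upper[rotated]) simp
  moreover have "(SUP k. a k) \<le> b k" for k by (rule cSUP_least) (auto intro: a_le_b)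
  ultimately have bounds: "a k \<le> (SUP k. a k)" "(SUP k. a k) \<le> b k" for k by blast+
  obtain k where "b k - a k < e"
    using order_tendstoD(2)[OF width \<open>0 < e\<close>] by (meson eventually_sequentially order_refl)
  show "\<forall>\<^sub>F s in at_top. dist (F s) (SUP k. a k) < e"
    using eventually_ge_at_top[of "k * \<tau>"]
  proof eventually_elim
    case (elim s)
    then have "dist (F s) (SUP k. a k) \<le> b k - a k"
      using between[OF elim] bounds[of k] by (auto simp: dist_real_def)
    with \<open>b k - a k < e\<close> show ?case by simp
  qed
qed

context
  fixes Q :: "('x::finite \<Rightarrow> real) \<Rightarrow> ('x \<Rightarrow> real)"
  assumes Q: "lower_transition_rate_operator Q"
begin

lemma convergent_funpow_lower_T_if_ergodic:
  assumes "ergodic Q" "0 < t"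
  shows "\<exists>c. \<forall>x. (\<lambda>n. (lower_T Q t ^^ n) f x) \<longlonglongrightarrow> c"
proof -
  obtain c where "\<And>x. ((\<lambda>s. lower_T Q s f x) \<longlongrightarrow> c) at_top"
    using \<open>ergodic Q\<close> unfolding ergodic_def by blast
  moreover have "filterlim (\<lambda>n. t * real n) at_top sequentially"
    by (rule filterlim_tendsto_pos_mult_at_top[OF tendsto_const \<open>0 < t\<close> filterlim_real_sequentially])
  ultimately have "(\<lambda>n. lower_T Q (t * real n) f x) \<longlonglongrightarrow> c" for x
    by (rule filterlim_compose)
  moreover have "(lower_T Q t ^^ n) f = lower_T Q (t * real n) f" for n
    using funpow_lower_T[OF Q, of t n f] \<open>0 < t\<close> by (simp add: mult.commute)
  ultimately show ?thesis by auto
qed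

lemma ergodic_if_oscillation_contraction:
  assumes "0 < \<tau>" "0 \<le> q" "q < 1" and contr: "\<And>h. oscillation (lower_T Q \<tau> h) \<le> q * oscillation h"
  shows "ergodic Q"
  unfolding ergodic_def
proof
  fix f :: "'x \<Rightarrow> real"
  define G where "G k = lower_T Q (k * \<tau>) f" for k :: nat
  define a where "a k = Min (range (G k))" for k
  define b where "b k = Max (range (G k))" for k
  have between: "a k \<le> lower_T Q s f x \<and> lower_T Q s f x \<le> b k" if "k * \<tau> \<le> s" for k s x
  proof (rule lower_T_between[OF Q, where r="k * \<tau>"])
    show "a k \<le> lower_T Q (k * \<tau>) f z \<and> lower_T Q (k * \<tau>) f z \<le> b k" for z
      unfolding a_def b_def G_def by simp
  qed (use \<open>0 < \<tau>\<close> that in simp_all)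
  have "a k \<le> G (Suc k) z \<and> G (Suc k) z \<le> b k" for k z
    unfolding G_def using \<open>0 < \<tau>\<close> by (intro between) simp
  then have "a k \<le> a (Suc k)" "b (Suc k) \<le> b k" for k
    unfolding a_def[of "Suc k"] b_def[of "Suc k"] by simp_all
  then have "incseq a" "decseq b" by (simp_all add: incseq_SucI decseq_SucI)
  have G_Suc: "G (Suc k) = lower_T Q \<tau> (G k)" for k
    using lower_T_semigroup[OF Q, of "k * \<tau>" \<tau> f] \<open>0 < \<tau>\<close> unfolding G_def by (simp add: algebra_simps)
  have width: "b k - a k \<le> q ^ k * (b 0 - a 0)" for k
  proof (induction k)
    case (Suc k)
    have "b (Suc k) - a (Suc k) \<le> q * (b k - a k)"
      using contr[of "G k"] unfolding G_Suc[symmetric] a_def b_def oscillation_def .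
    also have "\<dots> \<le> q * (q ^ k * (b 0 - a 0))" by (rule mult_left_mono[OF Suc.IH \<open>0 \<le> q\<close>])
    finally show ?case by simp
  qed simp
  have "(\<lambda>k. q ^ k * (b 0 - a 0)) \<longlonglongrightarrow> 0 * (b 0 - a 0)"
    using \<open>0 \<le> q\<close> \<open>q < 1\<close> by (intro tendsto_intros) simp
  then have lim: "(\<lambda>k. q ^ k * (b 0 - a 0)) \<longlonglongrightarrow> 0" by simp
  have "0 \<le> b k - a k" for k
    using between[of k "k * \<tau>" undefined] by simp
  then have "\<forall>k. norm (b k - a k) \<le> q ^ k * (b 0 - a 0)"
    using width by simp
  then have "(\<lambda>k. b k - a k) \<longlonglongrightarrow> 0"
    by (rule Lim_null_comparison[OF always_eventually lim])
  then have "((\<lambda>s. lower_T Q s f x) \<longlongrightarrow> (SUP k. a k)) at_top" for x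
    by (rule tendsto_Sup_if_nested_bounds[OF \<open>incseq a\<close> \<open>decseq b\<close> _ between])
  then show "\<exists>c. \<forall>x. ((\<lambda>t. lower_T Q t f x) \<longlongrightarrow> c) at_top" by blast
qed

end

theorem corollary1:
  fixes Q :: "('x::finite \<Rightarrow> real) \<Rightarrow> ('x \<Rightarrow> real)" and t :: real
  assumes "lower_transition_rate_operator Q" and "t > 0"
  shows "ergodic Q \<longleftrightarrow> regularly_absorbing (lower_T Q t)"
proof
  note Q = assms(1)
  have T: "lower_transition_operator (lower_T Q t)"
    using assms by (intro lower_T_is_lower_transition_operator) auto
  show "regularly_absorbing (lower_T Q t)" if "ergodic Q"
    using convergent_funpow_lower_T_if_ergodic[OF Q that \<open>t > 0\<close>]
    by (rule regularly_absorbing_if_convergent[OF T])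
  show "ergodic Q" if RA: "regularly_absorbing (lower_T Q t)"
  proof -
    obtain N q where "N \<ge> 1" "0 \<le> q" "q < 1"
      and contr: "\<And>h. oscillation ((lower_T Q t ^^ N) h) \<le> q * oscillation h"
      using regularly_absorbing_oscillation_contraction[OF T RA] by blast
    have "0 < N * t" using \<open>t > 0\<close> \<open>N \<ge> 1\<close> by simp
    moreover have "oscillation (lower_T Q (N * t) h) \<le> q * oscillation h" for h
      using contr[of h] \<open>t > 0\<close> by (simp add: funpow_lower_T[OF Q])
    ultimately show ?thesis using \<open>0 \<le> q\<close> \<open>q < 1\<close> ergodic_if_oscillation_contraction[OF Q] by blast
  qed
qed

end
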